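(* Let $(X,d)$ and $(Y,\rho)$ be compact metric spaces, let $F=\{f_1,\dots,f_k\}$ be a multiple mapping on $X$ and $G=\{g_1,\dots,g_m\}$ a multiple mapping on $Y$, and let $T:X\to Y$ be a topological conjugacy from $(X,F)$ to $(Y,G)$. Then $F$ is Hausdorff metric sensitive (with respect to $d_H$) if and only if $G$ is Hausdorff metric sensitive (with respect to $\rho_H$).
   Context: A multiple mapping $F=\{f_1,\dots,f_k\}$ on $X$ is a finite tuple of continuous self-maps of $X$; for $x\in X$ and $n\ge1$, $F(x)=\{f_1(x),\dots,f_k(x)\}$ and $F^n(x)=\{f_{i_1}f_{i_2}\cdots f_{i_n}(x)\mid i_1,\dots,i_n\in\{1,\dots,k\}\}$; for $A\subset X$, $F(A)=\bigcup_{a\in A}F(a)$. $d_H$ (resp. $\rho_H$) denotes the Hausdorff metric $d_H(A,B)=\max\{\sup_{a\in A}\inf_{b\in B}d(a,b),\sup_{b\in B}\inf_{a\in A}d(a,b)\}$ on nonempty compact subsets. $F$ is Hausdorff metric sensitive if there is $\delta>0$ such that for every nonempty open $U\subset X$ there exist $x,y\in U$ and $n\in\mathbb{Z}^+=\{1,2,\dots\}$ with $d_H(F^n(x),F^n(y))>\delta$. A topological conjugacy from $(X,F)$ to $(Y,G)$ is a homeomorphism $T:X\to Y$ such that $T(F(x))=G(T(x))$ for all $x\in X$. *)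

theory Defs
  imports "HOL-Analysis.Analysis"
begin

text \<open>A multiple mapping F = {f_1,...,f_k} is represented by the list fs = [f_1,...,f_k].\<close>

definition multiple_mapping :: "'a::metric_space set \<Rightarrow> ('a \<Rightarrow> 'a) list \<Rightarrow> bool" where
  "multiple_mapping X fs \<longleftrightarrow> fs \<noteq> [] \<and>
     (\<forall>f\<in>set fs. continuous_on X f \<and> f ` X \<subseteq> X)"

definition mm_app :: "('a \<Rightarrow> 'a) list \<Rightarrow> 'a \<Rightarrow> 'a set" where
  "mm_app fs x = (\<lambda>f. f x) ` set fs"

fun mm_iter :: "('a \<Rightarrow> 'a) list \<Rightarrow> nat \<Rightarrow> 'a \<Rightarrow> 'a set" where
  "mm_iter fs 0 x = {x}"
| "mm_iter fs (Suc n) x = (\<Union>f\<in>set fs. f ` mm_iter fs n x)"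

definition hausdorff_dist :: "'a::metric_space set \<Rightarrow> 'a set \<Rightarrow> real" where
  "hausdorff_dist A B = max (SUP a\<in>A. infdist a B) (SUP b\<in>B. infdist b A)"

definition hm_sensitive :: "'a::metric_space set \<Rightarrow> ('a \<Rightarrow> 'a) list \<Rightarrow> bool" where
  "hm_sensitive X fs \<longleftrightarrow> (\<exists>\<delta>>0. \<forall>U. openin (top_of_set X) U \<and> U \<noteq> {} \<longrightarrow>
     (\<exists>x\<in>U. \<exists>y\<in>U. \<exists>n\<ge>1. hausdorff_dist (mm_iter fs n x) (mm_iter fs n y) > \<delta>))"

definition mm_conjugacy ::
  "'a::metric_space set \<Rightarrow> ('a \<Rightarrow> 'a) list \<Rightarrow> 'b::metric_space set \<Rightarrow> ('b \<Rightarrow> 'b) list \<Rightarrow> ('a \<Rightarrow> 'b) \<Rightarrow> bool" where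
  "mm_conjugacy X fs Y gs T \<longleftrightarrow> (\<exists>T'. homeomorphism X Y T T') \<and>
     (\<forall>x\<in>X. T ` mm_app fs x = mm_app gs (T x))"

end

theory Submission
  imports Defs
begin

text \<open>For finite sets, d_H(A,B) > \<delta> just says that some point of one set stays more than
  \<delta> away from every point of the other. A conjugacy T maps F^n(x) onto G^n(T x), and since
  Y is compact, T^-1 is uniformly continuous: points more than \<delta> apart are mapped by T to
  points more than some \<epsilon> > 0 apart. Hence a pair x, y in T^-1(U) witnessing sensitivity
  of F yields the pair T x, T y in U witnessing sensitivity of G with constant \<epsilon>; the
  converse follows by symmetry of conjugacy.\<close>

lemma hausdorff_dist_finite_gt_iff:
  fixes A B :: "'a::metric_space set"
  assumes "finite A" "A \<noteq> {}" "finite B" "B \<noteq> {}"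
  shows "\<delta> < hausdorff_dist A B \<longleftrightarrow>
    (\<exists>a\<in>A. \<forall>b\<in>B. \<delta> < dist a b) \<or> (\<exists>b\<in>B. \<forall>a\<in>A. \<delta> < dist a b)"
proof -
  have infdist_gt: "\<delta> < infdist p C \<longleftrightarrow> (\<forall>c\<in>C. \<delta> < dist p c)"
    if "finite C" "C \<noteq> {}" for p :: 'a and C
    using that by (simp add: infdist_def finite_less_Inf_iff)
  have "\<delta> < (SUP a\<in>A. infdist a B) \<longleftrightarrow> (\<exists>a\<in>A. \<delta> < infdist a B)"
    using assms by (intro less_cSUP_iff) auto
  moreover have "\<delta> < (SUP b\<in>B. infdist b A) \<longleftrightarrow> (\<exists>b\<in>B. \<delta> < infdist b A)"
    using assms by (intro less_cSUP_iff) auto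
  ultimately show ?thesis
    unfolding hausdorff_dist_def less_max_iff_disj
    using assms by (simp add: infdist_gt dist_commute)
qed

lemma hausdorff_dist_image_gt:
  fixes A B :: "'a::metric_space set" and h :: "'a \<Rightarrow> 'b::metric_space"
  assumes "finite A" "A \<noteq> {}" "finite B" "B \<noteq> {}" "A \<subseteq> S" "B \<subseteq> S"
    and separating: "\<And>a b. a \<in> S \<Longrightarrow> b \<in> S \<Longrightarrow> \<delta> < dist a b \<Longrightarrow> \<epsilon> < dist (h a) (h b)"
    and "\<delta> < hausdorff_dist A B"
  shows "\<epsilon> < hausdorff_dist (h ` A) (h ` B)"
proof -
  have "(\<exists>a\<in>A. \<forall>b\<in>B. \<delta> < dist a b) \<or> (\<exists>b\<in>B. \<forall>a\<in>A. \<delta> < dist a b)"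
    using assms hausdorff_dist_finite_gt_iff by blast
  then have "(\<exists>a\<in>A. \<forall>b\<in>B. \<epsilon> < dist (h a) (h b)) \<or> (\<exists>b\<in>B. \<forall>a\<in>A. \<epsilon> < dist (h a) (h b))"
    using separating \<open>A \<subseteq> S\<close> \<open>B \<subseteq> S\<close> by (meson subsetD)
  then show ?thesis
    using assms(1-4) by (simp add: hausdorff_dist_finite_gt_iff)
qed

lemma homeomorphism_compact_separating:
  assumes "homeomorphism X Y T T'" "compact Y" "\<delta> > 0"
  obtains \<epsilon> where "\<epsilon> > 0"
    "\<And>a b. a \<in> X \<Longrightarrow> b \<in> X \<Longrightarrow> \<delta> < dist a b \<Longrightarrow> \<epsilon> < dist (T a) (T b)"
proof -
  have "uniformly_continuous_on Y T'"
    using compact_uniformly_continuous[OF homeomorphism_cont2[OF assms(1)] assms(2)] .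
  then obtain e where "e > 0"
    and e: "\<And>u v. u \<in> Y \<Longrightarrow> v \<in> Y \<Longrightarrow> dist u v < e \<Longrightarrow> dist (T' u) (T' v) < \<delta>"
    using \<open>\<delta> > 0\<close> unfolding uniformly_continuous_on_def by metis
  have "e/2 < dist (T a) (T b)" if "a \<in> X" "b \<in> X" "\<delta> < dist a b" for a b
  proof (rule ccontr)
    assume "\<not> e/2 < dist (T a) (T b)"
    then have "dist (T' (T a)) (T' (T b)) < \<delta>"
      using e[of "T a" "T b"] \<open>e > 0\<close> assms(1) that(1,2)
      by (auto simp: homeomorphism_def)
    then show False
      using assms(1) that by (simp add: homeomorphism_def)
  qed
  then show thesis
    using that \<open>e > 0\<close> by (meson half_gt_zero)
qed

lemma mm_iter_finite: "finite (mm_iter fs n x)"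
  by (induction n) auto

lemma mm_iter_nonempty: "fs \<noteq> [] \<Longrightarrow> mm_iter fs n x \<noteq> {}"
  by (induction n) (auto simp: neq_Nil_conv)

lemma mm_iter_subset:
  assumes "multiple_mapping X fs" "x \<in> X"
  shows "mm_iter fs n x \<subseteq> X"
  using assms by (induction n) (auto simp: multiple_mapping_def)

lemma mm_conjugacy_mm_iter:
  assumes "multiple_mapping X fs" "mm_conjugacy X fs Y gs T" "x \<in> X"
  shows "mm_iter gs n (T x) = T ` mm_iter fs n x"
proof (induction n)
  case 0
  then show ?case by simp
next
  case (Suc n)
  have "mm_iter fs n x \<subseteq> X"
    using mm_iter_subset assms by blast
  have "mm_iter gs (Suc n) (T x) = (\<Union>z\<in>mm_iter fs n x. mm_app gs (T z))"
    unfolding mm_app_def using Suc by auto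
  also have "\<dots> = (\<Union>z\<in>mm_iter fs n x. T ` mm_app fs z)"
    using \<open>mm_iter fs n x \<subseteq> X\<close> assms(2) unfolding mm_conjugacy_def by (intro SUP_cong) auto
  also have "\<dots> = T ` mm_iter fs (Suc n) x"
    unfolding mm_app_def by auto
  finally show ?case .
qed

lemma mm_conjugacy_inverse:
  assumes "multiple_mapping X fs" "mm_conjugacy X fs Y gs T" "homeomorphism X Y T T'"
  shows "mm_conjugacy Y gs X fs T'"
  unfolding mm_conjugacy_def
proof (intro conjI ballI)
  show "\<exists>S. homeomorphism Y X T' S"
    using assms(3) homeomorphism_symD by blast
  fix y assume "y \<in> Y"
  then have x: "T' y \<in> X" "T (T' y) = y"
    using assms(3) by (auto simp: homeomorphism_def)
  have "mm_app fs (T' y) \<subseteq> X"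
    using assms(1) x(1) by (auto simp: multiple_mapping_def mm_app_def)
  then have "T' ` T ` mm_app fs (T' y) = mm_app fs (T' y)"
    using assms(3) by (force simp: homeomorphism_def image_comp)
  moreover have "T ` mm_app fs (T' y) = mm_app gs y"
    using assms(2) x unfolding mm_conjugacy_def by metis
  ultimately show "T' ` mm_app gs y = mm_app fs (T' y)"
    by simp
qed

lemma hm_sensitive_conjugate:
  assumes "compact Y" "multiple_mapping X fs" "mm_conjugacy X fs Y gs T"
    and "hm_sensitive X fs"
  shows "hm_sensitive Y gs"
proof -
  obtain T' where h: "homeomorphism X Y T T'"
    using assms(3) unfolding mm_conjugacy_def by blast
  obtain \<delta> where "\<delta> > 0" and sensitive: "\<forall>V. openin (top_of_set X) V \<and> V \<noteq> {} \<longrightarrow>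
      (\<exists>x\<in>V. \<exists>y\<in>V. \<exists>n\<ge>1. hausdorff_dist (mm_iter fs n x) (mm_iter fs n y) > \<delta>)"
    using assms(4) unfolding hm_sensitive_def by blast
  obtain \<epsilon> where "\<epsilon> > 0"
    and separating: "\<And>a b. a \<in> X \<Longrightarrow> b \<in> X \<Longrightarrow> \<delta> < dist a b \<Longrightarrow> \<epsilon> < dist (T a) (T b)"
    using homeomorphism_compact_separating[OF h \<open>compact Y\<close> \<open>\<delta> > 0\<close>] by blast
  have "\<exists>u\<in>U. \<exists>v\<in>U. \<exists>n\<ge>1. \<epsilon> < hausdorff_dist (mm_iter gs n u) (mm_iter gs n v)"
    if U: "openin (top_of_set Y) U" "U \<noteq> {}" for U
  proof -
    define V where "V = T' ` U"
    have "openin (top_of_set X) V" "V \<noteq> {}"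
      using U homeomorphism_imp_open_map[OF homeomorphism_symD[OF h]] by (auto simp: V_def)
    then obtain x y n where "x \<in> V" "y \<in> V" "n \<ge> 1"
      and gt: "\<delta> < hausdorff_dist (mm_iter fs n x) (mm_iter fs n y)"
      using sensitive by blast
    then have xy: "x \<in> X" "y \<in> X" "T x \<in> U" "T y \<in> U"
      using h openin_imp_subset[OF U(1)] by (auto simp: homeomorphism_def V_def)
    have "fs \<noteq> []"
      using assms(2) by (simp add: multiple_mapping_def)
    have "mm_iter fs n x \<subseteq> X" "mm_iter fs n y \<subseteq> X"
      using mm_iter_subset[OF assms(2)] xy(1,2) by auto
    from hausdorff_dist_image_gt[OF mm_iter_finite mm_iter_nonempty[OF \<open>fs \<noteq> []\<close>]
        mm_iter_finite mm_iter_nonempty[OF \<open>fs \<noteq> []\<close>] this separating gt]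
    have "\<epsilon> < hausdorff_dist (mm_iter gs n (T x)) (mm_iter gs n (T y))"
      by (simp add: mm_conjugacy_mm_iter[OF assms(2,3)] xy(1,2))
    then show ?thesis
      using xy(3,4) \<open>n \<ge> 1\<close> by blast
  qed
  then show ?thesis
    unfolding hm_sensitive_def using \<open>\<epsilon> > 0\<close> by blast
qed

theorem theorem4p2:
  fixes X :: "'a::metric_space set" and Y :: "'b::metric_space set"
    and fs :: "('a \<Rightarrow> 'a) list" and gs :: "('b \<Rightarrow> 'b) list" and T :: "'a \<Rightarrow> 'b"
  assumes "compact X" and "compact Y"
    and "multiple_mapping X fs" and "multiple_mapping Y gs"
    and "mm_conjugacy X fs Y gs T"
  shows "hm_sensitive X fs \<longleftrightarrow> hm_sensitive Y gs"
proof -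
  obtain T' where "homeomorphism X Y T T'"
    using assms(5) unfolding mm_conjugacy_def by blast
  then have "mm_conjugacy Y gs X fs T'"
    using mm_conjugacy_inverse assms(3,5) by blast
  then show ?thesis
    using hm_sensitive_conjugate[OF assms(2,3,5)] hm_sensitive_conjugate[OF assms(1,4)] by blast
qed

end
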